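(* Let $n\ge1$ and let $A\subseteq\mathbb{F}_3^n$ be such that there are no $a,b,c\in A$ with $b\neq c$ and $a+b+c=0$. Then for every integer $d\ge0$, $$|A|\le 2\,|M(n,\lfloor d/2\rfloor)|+3^n-|M(n,d)|.$$
   Context: $\mathbb{F}_3$ is the field of integers modulo $3$. For integers $n\ge1$ and $e\ge 0$, $M(n,e)$ denotes the set of monomials $x_1^{\alpha_1}\cdots x_n^{\alpha_n}$ with $0\le\alpha_i\le2$ for all $i$ and $\alpha_1+\dots+\alpha_n\le e$; thus $|M(n,e)|=\sum_{i=0}^{e}\binom{n}{i}_2$, where $\binom{n}{i}_2$ is the coefficient of $x^i$ in $(1+x+x^2)^n$. *)

theory Defs
  imports Main "HOL-Library.Numeral_Type"
begin

text \<open>Vectors in F_3^n are modelled as functions 'n => 3 for a finite index type 'n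
 with CARD('n) = n; the type 3 from Numeral_Type is the integers modulo 3.\<close>

text \<open>Monomials x_1^a_1 ... x_n^a_n with 0 <= a_i <= 2 and total degree <= e,
 identified with their exponent vectors (supported on {..<n}).\<close>
definition M :: "nat \<Rightarrow> nat \<Rightarrow> (nat \<Rightarrow> nat) set" where
  "M n e = {\<alpha>. (\<forall>i. \<alpha> i \<le> 2) \<and> (\<forall>i\<ge>n. \<alpha> i = 0) \<and> (\<Sum>i<n. \<alpha> i) \<le> e}"

end

theory Submission
  imports Defs "HOL-Library.Function_Algebras" "HOL-Library.FuncSet" "HOL-Library.Indicator_Function"
    "HOL-Library.Cardinality" "HOL.Vector_Spaces"
begin

text \<open>
  Polynomial method.  The functions \<open>\<bbbF>\<^sub>3\<^sup>n \<rightarrow> \<bbbF>\<^sub>3\<close> spanned by the reduced monomials of degree at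
  most \<open>d\<close> form a space of dimension \<open>|M(n,d)|\<close>; those vanishing outside \<open>-A\<close> still have
  dimension at least \<open>|M(n,d)| - (3\<^sup>n - |A|)\<close>, and such a subspace contains a function \<open>P\<close>
  with at least that many nonzero values, all of them on \<open>-A\<close>.  For
  \<open>T = {a \<in> A. P(-a) \<noteq> 0}\<close> the matrix \<open>(P(a + t))\<^sub>a\<^sub>,\<^sub>t\<^sub>\<in>\<^sub>T\<close> is diagonal with nonzero
  diagonal, because \<open>a + t + c = 0\<close> has no solution in \<open>A\<close> with \<open>a \<noteq> t\<close>.  On the other hand,
  expanding every monomial of \<open>P(a + t)\<close>, each term has a factor of degree at most \<open>\<lfloor>d/2\<rfloor>\<close>
  in \<open>a\<close> or in \<open>t\<close>, so that matrix has rank at most \<open>2 |M(n,\<lfloor>d/2\<rfloor>)|\<close>.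
\<close>

section \<open>The field with three elements\<close>

lemma num3_cases: "(x::3) = 0 \<or> x = 1 \<or> x = 2"
proof (cases x)
  case (of_int z)
  then have "z = 0 \<or> z = 1 \<or> z = 2" by auto
  then show ?thesis using of_int by auto
qed

lemma num3_add_self: "(x::3) + x = - x"
  using num3_cases[of x] by auto

text \<open>The numeral type \<open>3\<close> is only a ring; a copy of it is made a field.\<close>

typedef gf3 = "UNIV :: 3 set" by simp
setup_lifting type_definition_gf3

instantiation gf3 :: comm_ring_1
begin
lift_definition zero_gf3 :: gf3 is 0 .
lift_definition one_gf3 :: gf3 is 1 .
lift_definition plus_gf3 :: "gf3 \<Rightarrow> gf3 \<Rightarrow> gf3" is "(+)" .
lift_definition minus_gf3 :: "gf3 \<Rightarrow> gf3 \<Rightarrow> gf3" is "(-)" .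
lift_definition uminus_gf3 :: "gf3 \<Rightarrow> gf3" is uminus .
lift_definition times_gf3 :: "gf3 \<Rightarrow> gf3 \<Rightarrow> gf3" is "(*)" .
instance
  by standard (transfer, simp add: algebra_simps)+
end

instantiation gf3 :: field
begin
lift_definition inverse_gf3 :: "gf3 \<Rightarrow> gf3" is "\<lambda>x. x" \<comment> \<open>\<open>1\<close> and \<open>2\<close> are self-inverse\<close> .
lift_definition divide_gf3 :: "gf3 \<Rightarrow> gf3 \<Rightarrow> gf3" is "(*)" .
instance
  by standard (transfer; use num3_cases in fastforce)+
end

lemma Abs_gf3_add: "Abs_gf3 (x + y) = Abs_gf3 x + Abs_gf3 y"
  by (simp add: plus_gf3.abs_eq)

lemma Abs_gf3_diff: "Abs_gf3 (x - y) = Abs_gf3 x - Abs_gf3 y"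
  by (simp add: minus_gf3.abs_eq)

lemma Abs_gf3_eq_0_iff: "Abs_gf3 x = 0 \<longleftrightarrow> x = 0"
  by (metis Abs_gf3_inject UNIV_I zero_gf3.abs_eq)

lemma gf3_square_eq_1: "(z::gf3) \<noteq> 0 \<Longrightarrow> z\<^sup>2 = 1"
  unfolding power2_eq_square by transfer (use num3_cases in fastforce)

section \<open>Spaces of functions into a field\<close>

definition fscale :: "'k::field \<Rightarrow> ('x \<Rightarrow> 'k) \<Rightarrow> 'x \<Rightarrow> 'k" where
  "fscale c f = (\<lambda>x. c * f x)"

interpretation fun_vs: vector_space "fscale :: 'k::field \<Rightarrow> ('x \<Rightarrow> 'k) \<Rightarrow> 'x \<Rightarrow> 'k"
  by unfold_locales (auto simp: fscale_def fun_eq_iff algebra_simps)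

lemma sum_fun_apply: "(\<Sum>a\<in>A. f a) x = (\<Sum>a\<in>A. f a x)"
  by (induction A rule: infinite_finite_induct) auto

lemma inj_indicator_singleton: "inj (\<lambda>y. indicator {y} :: 'x \<Rightarrow> 'k::zero_neq_one)"
  by (rule injI) (metis indicator_simps(1) indicator_simps(2) singletonD singletonI zero_neq_one)

lemma independent_indicators:
  "fun_vs.independent (range (\<lambda>y::'x::finite. indicator {y} :: 'x \<Rightarrow> 'k::field))"
proof (rule fun_vs.independent_if_scalars_zero)
  fix c :: "('x \<Rightarrow> 'k) \<Rightarrow> 'k" and v :: "'x \<Rightarrow> 'k"
  assume sum0: "(\<Sum>u\<in>range (\<lambda>y. indicator {y}). fscale (c u) u) = 0"
    and "v \<in> range (\<lambda>y. indicator {y})"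
  then obtain y where y: "v = indicator {y}" by auto
  have "0 = (\<Sum>u\<in>range (\<lambda>y. indicator {y}). fscale (c u) u) y"
    using sum0 by simp
  also have "\<dots> = (\<Sum>z\<in>UNIV. c (indicator {z}) * indicator {z} y)"
    by (simp add: sum_fun_apply sum.reindex[OF inj_indicator_singleton] fscale_def)
  also have "\<dots> = (\<Sum>z\<in>UNIV. if z = y then c v else 0)"
    by (rule sum.cong) (auto simp: y)
  also have "\<dots> = c v"
    by simp
  finally show "c v = 0" ..
qed simp

lemma span_indicators:
  "fun_vs.span (range (\<lambda>y::'x::finite. indicator {y} :: 'x \<Rightarrow> 'k::field)) = UNIV"
proof -
  have "f = (\<Sum>y\<in>UNIV. fscale (f y) (indicator {y}))" for f :: "'x \<Rightarrow> 'k"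
  proof
    fix x
    have "(\<Sum>y\<in>UNIV. fscale (f y) (indicator {y})) x = (\<Sum>y\<in>UNIV. if y = x then f x else 0)"
      unfolding sum_fun_apply fscale_def by (rule sum.cong) auto
    then show "f x = (\<Sum>y\<in>UNIV. fscale (f y) (indicator {y})) x" by simp
  qed
  moreover have "(\<Sum>y\<in>UNIV. fscale (f y) (indicator {y})) \<in> fun_vs.span (range (\<lambda>y. indicator {y}))"
    for f :: "'x \<Rightarrow> 'k"
    by (intro fun_vs.span_sum fun_vs.span_scale fun_vs.span_base) auto
  ultimately show ?thesis by (metis UNIV_eq_I)
qed

interpretation fun_fds: finite_dimensional_vector_space
  "fscale :: 'k::field \<Rightarrow> ('x::finite \<Rightarrow> 'k) \<Rightarrow> _" "range (\<lambda>y. indicator {y})"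
  by unfold_locales (simp_all add: independent_indicators span_indicators)

lemma dim_UNIV_fun: "fun_vs.dim (UNIV :: ('x::finite \<Rightarrow> 'k::field) set) = CARD('x)"
  by (simp add: card_image inj_indicator_singleton)

definition vanishing_on :: "('x \<Rightarrow> 'k::zero) set \<Rightarrow> 'x set \<Rightarrow> ('x \<Rightarrow> 'k) set" where
  "vanishing_on W S = {w \<in> W. \<forall>x\<in>S. w x = 0}"

lemma subspace_vanishing_on:
  "fun_vs.subspace W \<Longrightarrow> fun_vs.subspace (vanishing_on W S)"
  unfolding fun_vs.subspace_def vanishing_on_def fscale_def by simp

lemma vanishing_on_insert: "vanishing_on W (insert x S) = vanishing_on (vanishing_on W S) {x}"
  unfolding vanishing_on_def by auto

lemma dim_le_dim_vanishing_on_point: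
  fixes W :: "('x::finite \<Rightarrow> 'k::field) set"
  assumes W: "fun_vs.subspace W"
  shows "fun_vs.dim W \<le> fun_vs.dim (vanishing_on W {x}) + 1"
proof (cases "\<exists>u\<in>W. u x \<noteq> 0")
  case False
  then have "vanishing_on W {x} = W" unfolding vanishing_on_def by auto
  then show ?thesis by simp
next
  case True
  then obtain u where u: "u \<in> W" "u x \<noteq> 0" by auto
  let ?V = "insert u (vanishing_on W {x})"
  have "w \<in> fun_vs.span ?V" if w: "w \<in> W" for w
  proof -
    define c where "c = w x / u x"
    have "w - fscale c u \<in> W"
      using w u W by (simp add: fun_vs.subspace_diff fun_vs.subspace_scale)
    moreover have "(w - fscale c u) x = 0"
      using u by (simp add: c_def fscale_def)
    ultimately have "w - fscale c u \<in> vanishing_on W {x}"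
      by (simp add: vanishing_on_def)
    then have "(w - fscale c u) + fscale c u \<in> fun_vs.span ?V"
      by (intro fun_vs.span_add fun_vs.span_scale fun_vs.span_base) auto
    then show ?thesis by simp
  qed
  then have "fun_vs.dim W \<le> fun_vs.dim ?V" by (intro fun_fds.dim_mono) blast
  also have "\<dots> \<le> fun_vs.dim (vanishing_on W {x}) + 1" by (simp add: fun_fds.dim_insert)
  finally show ?thesis .
qed

lemma dim_le_dim_vanishing_on:
  fixes W :: "('x::finite \<Rightarrow> 'k::field) set"
  assumes W: "fun_vs.subspace W"
  shows "fun_vs.dim W \<le> fun_vs.dim (vanishing_on W S) + card S"
  using finite[of S]
proof (induction S rule: finite_induct)
  case empty
  have "vanishing_on W {} = W" unfolding vanishing_on_def by auto
  then show ?case by simp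
next
  case (insert x S)
  have "fun_vs.dim (vanishing_on W S) \<le> fun_vs.dim (vanishing_on W (insert x S)) + 1"
    unfolding vanishing_on_insert[of W x S]
    by (rule dim_le_dim_vanishing_on_point[OF subspace_vanishing_on[OF W]])
  with insert show ?case by simp
qed

text \<open>The support of a vector of maximal support cannot be enlarged, so the vectors vanishing on
  it are all zero.\<close>

lemma subspace_has_large_support:
  fixes W :: "('x::finite \<Rightarrow> 'k::field) set"
  assumes W: "fun_vs.subspace W"
  shows "\<exists>w\<in>W. fun_vs.dim W \<le> card {x. w x \<noteq> 0}"
proof -
  have "card {x. v x \<noteq> 0} < Suc CARD('x)" for v :: "'x \<Rightarrow> 'k"
    by (simp add: card_mono le_imp_less_Suc)
  then obtain w where w: "w \<in> W" and max: "\<And>v. v \<in> W \<Longrightarrow> card {x. v x \<noteq> 0} \<le> card {x. w x \<noteq> 0}"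
    using ex_has_greatest_nat[of "\<lambda>v. v \<in> W" 0 "\<lambda>v. card {x. v x \<noteq> 0}" "Suc CARD('x)"]
      fun_vs.subspace_0[OF W] by blast
  let ?T = "{x. w x \<noteq> 0}"
  show ?thesis
  proof (rule ccontr)
    assume "\<not> ?thesis"
    with w have "card ?T < fun_vs.dim W" by (meson not_le)
    with dim_le_dim_vanishing_on[OF W, of ?T] have "fun_vs.dim (vanishing_on W ?T) \<noteq> 0"
      by linarith
    then have "\<not> vanishing_on W ?T \<subseteq> {0}" by simp
    then obtain v where v: "v \<in> W" "\<And>x. w x \<noteq> 0 \<Longrightarrow> v x = 0" and "v \<noteq> 0"
      unfolding vanishing_on_def by auto
    then obtain y where y: "v y \<noteq> 0" by (auto simp: fun_eq_iff)
    have "y \<notin> ?T" using v y by auto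
    then have "insert y ?T \<subseteq> {x. (w + v) x \<noteq> 0}" using v y by auto
    then have "card (insert y ?T) \<le> card {x. (w + v) x \<noteq> 0}" by (intro card_mono) simp_all
    moreover have "w + v \<in> W" using W w v by (simp add: fun_vs.subspace_add)
    ultimately show False using max[of "w + v"] \<open>y \<notin> ?T\<close> by simp
  qed
qed

lemma exists_vanishing_on_large_support:
  fixes W :: "('x::finite \<Rightarrow> 'k::field) set"
  assumes "fun_vs.subspace W"
  shows "\<exists>w\<in>W. (\<forall>x\<in>S. w x = 0) \<and> fun_vs.dim W \<le> card {x. w x \<noteq> 0} + card S"
  using subspace_has_large_support[OF subspace_vanishing_on[OF assms, of S]]
    dim_le_dim_vanishing_on[OF assms, of S]
  unfolding vanishing_on_def by fastforce

text \<open>A diagonal matrix with nonzero diagonal has full rank, whereas a sum of \<open>|I|\<close> rank-one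
  matrices has rank at most \<open>|I|\<close>.\<close>

lemma card_le_of_diagonal_decomposition:
  fixes f :: "'x \<Rightarrow> 'x \<Rightarrow> 'k::field"
  assumes "finite I" "finite T"
    and decomp: "\<And>a t. f a t = (\<Sum>i\<in>I. u i a * v i t)"
    and diag: "\<And>t. t \<in> T \<Longrightarrow> f t t \<noteq> 0"
    and off_diag: "\<And>a t. a \<in> T \<Longrightarrow> t \<in> T \<Longrightarrow> a \<noteq> t \<Longrightarrow> f a t = 0"
  shows "card T \<le> card I"
proof -
  define col where "col t = (\<lambda>a. f a t)" for t
  have inj: "inj_on col T"
    by (rule inj_onI) (metis col_def diag off_diag)
  have "fun_vs.independent (col ` T)"
  proof (rule fun_vs.independent_if_scalars_zero)
    fix c :: "('x \<Rightarrow> 'k) \<Rightarrow> 'k" and w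
    assume sum0: "(\<Sum>w\<in>col ` T. fscale (c w) w) = 0" and "w \<in> col ` T"
    then obtain t where t: "t \<in> T" "w = col t" by auto
    have "0 = (\<Sum>w\<in>col ` T. fscale (c w) w) t" using sum0 by simp
    also have "\<dots> = (\<Sum>s\<in>T. c (col s) * f t s)"
      unfolding sum_fun_apply sum.reindex[OF inj] by (simp add: fscale_def col_def)
    also have "\<dots> = (\<Sum>s\<in>T. if s = t then c w * f t t else 0)"
      by (rule sum.cong) (auto simp: t off_diag)
    also have "\<dots> = c w * f t t" using t \<open>finite T\<close> by simp
    finally show "c w = 0" using diag[OF t(1)] by simp
  qed (use \<open>finite T\<close> in simp)
  moreover have "col ` T \<subseteq> fun_vs.span (u ` I)"
  proof
    fix w assume "w \<in> col ` T"
    then obtain t where "w = col t" by auto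
    then have "w = (\<Sum>i\<in>I. fscale (v i t) (u i))"
      by (simp add: fun_eq_iff col_def decomp sum_fun_apply fscale_def mult.commute)
    also have "\<dots> \<in> fun_vs.span (u ` I)"
      by (intro fun_vs.span_sum fun_vs.span_scale fun_vs.span_base) auto
    finally show "w \<in> fun_vs.span (u ` I)" .
  qed
  ultimately have "card (col ` T) \<le> card (u ` I)"
    using fun_vs.independent_span_bound \<open>finite I\<close> by blast
  also have "\<dots> \<le> card I" using \<open>finite I\<close> by (rule card_image_le)
  finally show ?thesis using card_image[OF inj] by simp
qed

section \<open>Reduced monomials over \<open>\<bbbF>\<^sub>3\<close>\<close>

definition mon :: "('n \<Rightarrow> nat) \<Rightarrow> ('n \<Rightarrow> 3) \<Rightarrow> gf3" where
  "mon \<alpha> x = (\<Prod>i\<in>UNIV. Abs_gf3 (x i) ^ \<alpha> i)"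

definition reduced_exps :: "nat \<Rightarrow> ('n \<Rightarrow> nat) set" where
  "reduced_exps e = {\<alpha>. (\<forall>i. \<alpha> i \<le> 2) \<and> (\<Sum>i\<in>UNIV. \<alpha> i) \<le> e}"

lemma reduced_exps_subset: "reduced_exps e \<subseteq> UNIV \<rightarrow>\<^sub>E {..2}"
  unfolding reduced_exps_def PiE_UNIV_domain by auto

lemma finite_reduced_exps: "finite (reduced_exps e :: ('n::finite \<Rightarrow> nat) set)"
  by (rule finite_subset[OF reduced_exps_subset]) (simp add: finite_PiE)

lemma card_reduced_exps: "card (reduced_exps e :: ('n::finite \<Rightarrow> nat) set) = card (M CARD('n) e)"
proof -
  let ?N = "CARD('n)"
  obtain idx :: "'n \<Rightarrow> nat" where idx: "bij_betw idx UNIV {..<?N}"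
    using ex_bij_betw_finite_nat[of "UNIV :: 'n set"] by (auto simp: atLeast0LessThan)
  define iv where "iv = inv_into UNIV idx"
  have iv_idx: "iv (idx i) = i" for i
    using idx unfolding iv_def by (simp add: bij_betw_def)
  have idx_iv: "j < ?N \<Longrightarrow> idx (iv j) = j" for j
    using idx unfolding iv_def by (simp add: bij_betw_def f_inv_into_f)
  have idx_less: "idx i < ?N" for i
    using idx by (auto simp: bij_betw_def)
  have sum_idx: "(\<Sum>j<?N. \<beta> j) = (\<Sum>i\<in>UNIV. \<beta> (idx i))" for \<beta> :: "nat \<Rightarrow> nat"
    using sum.reindex_bij_betw[OF idx, of \<beta>] by simp
  have "bij_betw (\<lambda>\<beta>. \<beta> \<circ> idx) (M ?N e) (reduced_exps e)"
  proof (rule bij_betw_byWitness[where f' = "\<lambda>\<alpha> j. if j < ?N then \<alpha> (iv j) else 0"])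
    show "\<forall>\<beta>\<in>M ?N e. (\<lambda>j. if j < ?N then (\<beta> \<circ> idx) (iv j) else 0) = \<beta>"
      by (auto simp: M_def idx_iv fun_eq_iff)
    show "\<forall>\<alpha>\<in>reduced_exps e. (\<lambda>j. if j < ?N then \<alpha> (iv j) else 0) \<circ> idx = \<alpha>"
      by (auto simp: idx_less iv_idx)
    show "(\<lambda>\<beta>. \<beta> \<circ> idx) ` M ?N e \<subseteq> reduced_exps e"
      by (auto simp: M_def reduced_exps_def sum_idx)
    show "(\<lambda>\<alpha> j. if j < ?N then \<alpha> (iv j) else 0) ` reduced_exps e \<subseteq> M ?N e"
      by (auto simp: M_def reduced_exps_def sum_idx idx_less iv_idx)
  qed
  then show ?thesis by (simp add: bij_betw_same_card)
qed

text \<open>In \<open>\<bbbF>\<^sub>3\<close> the function \<open>1 - z\<^sup>2\<close> is the indicator of \<open>z = 0\<close>.\<close>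

lemma indicator_singleton_eq_prod:
  fixes x y :: "'n::finite \<Rightarrow> 3"
  shows "(indicator {y} x :: gf3) = (\<Prod>i\<in>UNIV. 1 - (Abs_gf3 (x i) - Abs_gf3 (y i))\<^sup>2)"
proof (cases "x = y")
  case False
  then obtain i where "x i \<noteq> y i" by auto
  then have "Abs_gf3 (x i) - Abs_gf3 (y i) \<noteq> 0"
    by (simp add: Abs_gf3_diff[symmetric] Abs_gf3_eq_0_iff)
  then have "1 - (Abs_gf3 (x i) - Abs_gf3 (y i))\<^sup>2 = 0" by (simp add: gf3_square_eq_1)
  with False show ?thesis by (auto intro: prod_zero)
qed simp

lemma indicator_in_span_mon:
  fixes y :: "'n::finite \<Rightarrow> 3"
  shows "indicator {y} \<in> fun_vs.span (mon ` (UNIV \<rightarrow>\<^sub>E {..2}))"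
proof -
  define coeff where "coeff i = [1 - Abs_gf3 (y i) ^ 2, 2 * Abs_gf3 (y i), - 1]" for i
  define c where "c \<beta> = (\<Prod>i\<in>UNIV. coeff i ! \<beta> i)" for \<beta> :: "'n \<Rightarrow> nat"
  have "indicator {y} = (\<Sum>\<beta>\<in>UNIV \<rightarrow>\<^sub>E {..2}. fscale (c \<beta>) (mon \<beta>))"
  proof
    fix x
    have "indicator {y} x = (\<Prod>i\<in>UNIV. \<Sum>k\<le>2. coeff i ! k * Abs_gf3 (x i) ^ k)"
      by (simp add: indicator_singleton_eq_prod coeff_def numeral_2_eq_2 power2_eq_square
          algebra_simps)
    also have "\<dots> = (\<Sum>\<beta>\<in>UNIV \<rightarrow>\<^sub>E {..2}. \<Prod>i\<in>UNIV. coeff i ! \<beta> i * Abs_gf3 (x i) ^ \<beta> i)"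
      by (rule prod_sum_PiE) auto
    also have "\<dots> = (\<Sum>\<beta>\<in>UNIV \<rightarrow>\<^sub>E {..2}. fscale (c \<beta>) (mon \<beta>)) x"
      by (simp add: c_def mon_def fscale_def sum_fun_apply prod.distrib)
    finally show "indicator {y} x = (\<Sum>\<beta>\<in>UNIV \<rightarrow>\<^sub>E {..2}. fscale (c \<beta>) (mon \<beta>)) x" .
  qed
  also have "\<dots> \<in> fun_vs.span (mon ` (UNIV \<rightarrow>\<^sub>E {..2}))"
    by (intro fun_vs.span_sum fun_vs.span_scale fun_vs.span_base) auto
  finally show ?thesis .
qed

lemma span_mon_UNIV:
  "fun_vs.span (mon ` (UNIV \<rightarrow>\<^sub>E {..2})) = (UNIV :: (('n::finite \<Rightarrow> 3) \<Rightarrow> gf3) set)"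
proof -
  have "fun_vs.span (range (\<lambda>y::'n \<Rightarrow> 3. indicator {y})) \<subseteq> fun_vs.span (mon ` (UNIV \<rightarrow>\<^sub>E {..2}))"
    by (intro fun_vs.span_minimal fun_vs.subspace_span) (use indicator_in_span_mon in blast)
  then show ?thesis by (auto simp: span_indicators)
qed

text \<open>There are \<open>3\<^sup>n\<close> reduced monomials spanning the \<open>3\<^sup>n\<close>-dimensional space of all functions,
  so they are distinct and form a basis.\<close>

lemma card_reduced_exps_all_eq_dim:
  "card (UNIV \<rightarrow>\<^sub>E {..2::nat} :: ('n::finite \<Rightarrow> nat) set) = fun_vs.dim (UNIV :: (('n \<Rightarrow> 3) \<Rightarrow> gf3) set)"
  unfolding dim_UNIV_fun by (simp add: card_PiE card_fun)

lemma card_image_mon: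
  "card (mon ` (UNIV \<rightarrow>\<^sub>E {..2::nat}) :: (('n::finite \<Rightarrow> 3) \<Rightarrow> gf3) set)
     = card (UNIV \<rightarrow>\<^sub>E {..2::nat} :: ('n \<Rightarrow> nat) set)"
proof (rule antisym)
  show "card (mon ` (UNIV \<rightarrow>\<^sub>E {..2::nat}) :: (('n \<Rightarrow> 3) \<Rightarrow> gf3) set)
      \<le> card (UNIV \<rightarrow>\<^sub>E {..2::nat} :: ('n \<Rightarrow> nat) set)"
    by (rule card_image_le) (simp add: finite_PiE)
  show "card (UNIV \<rightarrow>\<^sub>E {..2::nat} :: ('n \<Rightarrow> nat) set)
      \<le> card (mon ` (UNIV \<rightarrow>\<^sub>E {..2::nat}) :: (('n \<Rightarrow> 3) \<Rightarrow> gf3) set)"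
    unfolding card_reduced_exps_all_eq_dim
    by (rule fun_vs.dim_le_card) (simp_all add: span_mon_UNIV finite_PiE)
qed

lemma inj_on_mon: "inj_on (mon :: _ \<Rightarrow> ('n::finite \<Rightarrow> 3) \<Rightarrow> gf3) (UNIV \<rightarrow>\<^sub>E {..2})"
  by (rule eq_card_imp_inj_on) (simp_all add: finite_PiE card_image_mon)

lemma independent_mon:
  "fun_vs.independent (mon ` (UNIV \<rightarrow>\<^sub>E {..2::nat}) :: (('n::finite \<Rightarrow> 3) \<Rightarrow> gf3) set)"
  by (rule fun_fds.card_le_dim_spanning[of _ UNIV]) (simp_all add: span_mon_UNIV finite_PiE card_image_mon card_reduced_exps_all_eq_dim)

lemma dim_mon_reduced_exps:
  "fun_vs.dim (mon ` reduced_exps e :: (('n::finite \<Rightarrow> 3) \<Rightarrow> gf3) set)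
     = card (reduced_exps e :: ('n \<Rightarrow> nat) set)"
proof -
  have "fun_vs.independent (mon ` reduced_exps e :: (('n \<Rightarrow> 3) \<Rightarrow> gf3) set)"
    by (rule fun_vs.independent_mono[OF independent_mon]) (intro image_mono reduced_exps_subset)
  then have "fun_vs.dim (mon ` reduced_exps e :: (('n \<Rightarrow> 3) \<Rightarrow> gf3) set)
      = card (mon ` reduced_exps e :: (('n \<Rightarrow> 3) \<Rightarrow> gf3) set)"
    by (rule fun_vs.dim_eq_card_independent)
  also have "\<dots> = card (reduced_exps e :: ('n \<Rightarrow> nat) set)"
    by (rule card_image) (rule inj_on_subset[OF inj_on_mon reduced_exps_subset])
  finally show ?thesis .
qed

section \<open>Splitting \<open>P(a + t)\<close> into low-degree pieces\<close>

lemma mon_add: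
  fixes \<alpha> :: "'n::finite \<Rightarrow> nat"
  shows "mon \<alpha> (a + t) = (\<Sum>\<beta>\<in>(\<Pi>\<^sub>E i\<in>UNIV. {..\<alpha> i}).
           of_nat (\<Prod>i\<in>UNIV. \<alpha> i choose \<beta> i) * mon \<beta> a * mon (\<lambda>i. \<alpha> i - \<beta> i) t)"
proof -
  have "mon \<alpha> (a + t) = (\<Prod>i\<in>UNIV. \<Sum>k\<le>\<alpha> i.
          of_nat (\<alpha> i choose k) * Abs_gf3 (a i) ^ k * Abs_gf3 (t i) ^ (\<alpha> i - k))"
    by (simp add: mon_def Abs_gf3_add binomial_ring)
  also have "\<dots> = (\<Sum>\<beta>\<in>(\<Pi>\<^sub>E i\<in>UNIV. {..\<alpha> i}). \<Prod>i\<in>UNIV.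
          of_nat (\<alpha> i choose \<beta> i) * Abs_gf3 (a i) ^ \<beta> i * Abs_gf3 (t i) ^ (\<alpha> i - \<beta> i))"
    by (rule prod_sum_PiE) auto
  also have "\<dots> = (\<Sum>\<beta>\<in>(\<Pi>\<^sub>E i\<in>UNIV. {..\<alpha> i}).
          of_nat (\<Prod>i\<in>UNIV. \<alpha> i choose \<beta> i) * mon \<beta> a * mon (\<lambda>i. \<alpha> i - \<beta> i) t)"
    by (simp add: mon_def prod.distrib)
  finally show ?thesis .
qed

definition low_degree_split :: "nat \<Rightarrow> (('n \<Rightarrow> 3) \<times> ('n \<Rightarrow> 3) \<Rightarrow> gf3) \<Rightarrow> bool" where
  "low_degree_split k g \<longleftrightarrow> (\<exists>F G. \<forall>a t. g (a, t) =
     (\<Sum>\<beta>\<in>reduced_exps k. mon \<beta> a * F \<beta> t) + (\<Sum>\<gamma>\<in>reduced_exps k. G \<gamma> a * mon \<gamma> t))"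

lemma subspace_low_degree_split:
  "fun_vs.subspace {g :: ('n::finite \<Rightarrow> 3) \<times> ('n \<Rightarrow> 3) \<Rightarrow> gf3. low_degree_split k g}"
  unfolding fun_vs.subspace_def
proof (intro conjI ballI allI)
  show "0 \<in> {g. low_degree_split k g}"
    unfolding low_degree_split_def by (auto intro!: exI[of _ "\<lambda>_ _. 0"])
next
  fix g h :: "('n \<Rightarrow> 3) \<times> ('n \<Rightarrow> 3) \<Rightarrow> gf3"
  assume "g \<in> {g. low_degree_split k g}" "h \<in> {g. low_degree_split k g}"
  then obtain F1 G1 F2 G2 where
    g: "\<And>a t. g (a, t) = (\<Sum>\<beta>\<in>reduced_exps k. mon \<beta> a * F1 \<beta> t) + (\<Sum>\<gamma>\<in>reduced_exps k. G1 \<gamma> a * mon \<gamma> t)"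
    and h: "\<And>a t. h (a, t) = (\<Sum>\<beta>\<in>reduced_exps k. mon \<beta> a * F2 \<beta> t) + (\<Sum>\<gamma>\<in>reduced_exps k. G2 \<gamma> a * mon \<gamma> t)"
    unfolding low_degree_split_def by blast
  show "g + h \<in> {g. low_degree_split k g}"
    unfolding mem_Collect_eq low_degree_split_def
    by (rule exI[of _ "\<lambda>\<beta> t. F1 \<beta> t + F2 \<beta> t"], rule exI[of _ "\<lambda>\<gamma> a. G1 \<gamma> a + G2 \<gamma> a"])
      (simp add: g h sum.distrib algebra_simps)
next
  fix c and g :: "('n \<Rightarrow> 3) \<times> ('n \<Rightarrow> 3) \<Rightarrow> gf3"
  assume "g \<in> {g. low_degree_split k g}"
  then obtain F G where
    g: "\<And>a t. g (a, t) = (\<Sum>\<beta>\<in>reduced_exps k. mon \<beta> a * F \<beta> t) + (\<Sum>\<gamma>\<in>reduced_exps k. G \<gamma> a * mon \<gamma> t)"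
    unfolding low_degree_split_def by blast
  show "fscale c g \<in> {g. low_degree_split k g}"
    unfolding mem_Collect_eq low_degree_split_def
    by (rule exI[of _ "\<lambda>\<beta> t. c * F \<beta> t"], rule exI[of _ "\<lambda>\<gamma> a. c * G \<gamma> a"])
      (simp add: g fscale_def sum_distrib_left algebra_simps)
qed

lemma low_degree_split_left:
  fixes \<beta> :: "'n::finite \<Rightarrow> nat"
  assumes "\<beta> \<in> reduced_exps k"
  shows "low_degree_split k (\<lambda>(a, t). mon \<beta> a * g t)"
  unfolding low_degree_split_def
  by (rule exI[of _ "\<lambda>\<beta>' t. if \<beta>' = \<beta> then g t else 0"], rule exI[of _ "\<lambda>_ _. 0"])
    (simp add: assms finite_reduced_exps if_distrib if_distribR cong: if_cong)

lemma low_degree_split_right: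
  fixes \<gamma> :: "'n::finite \<Rightarrow> nat"
  assumes "\<gamma> \<in> reduced_exps k"
  shows "low_degree_split k (\<lambda>(a, t). g a * mon \<gamma> t)"
  unfolding low_degree_split_def
  by (rule exI[of _ "\<lambda>_ _. 0"], rule exI[of _ "\<lambda>\<gamma>' a. if \<gamma>' = \<gamma> then g a else 0"])
    (simp add: assms finite_reduced_exps if_distrib if_distribR cong: if_cong)

text \<open>In each term of the expansion of \<open>mon \<alpha> (a + t)\<close> the degrees in \<open>a\<close> and in \<open>t\<close> add up to
  at most \<open>d\<close>, so one of them is at most \<open>d div 2\<close>.\<close>

lemma low_degree_split_mon_add:
  fixes \<alpha> :: "'n::finite \<Rightarrow> nat"
  assumes \<alpha>: "\<alpha> \<in> reduced_exps d"
  shows "low_degree_split (d div 2) (\<lambda>(a, t). mon \<alpha> (a + t))"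
proof -
  let ?k = "d div 2"
  have split_term: "low_degree_split ?k (\<lambda>(a, t). c * mon \<beta> a * mon (\<lambda>i. \<alpha> i - \<beta> i) t)"
    if \<beta>: "\<beta> \<in> (\<Pi>\<^sub>E i\<in>UNIV. {..\<alpha> i})" for \<beta> c
  proof -
    have le: "\<beta> i \<le> \<alpha> i" "\<alpha> i \<le> 2" for i
      using \<beta> \<alpha> by (auto simp: reduced_exps_def PiE_UNIV_domain)
    then have "(\<Sum>i\<in>UNIV. \<beta> i) + (\<Sum>i\<in>UNIV. \<alpha> i - \<beta> i) = (\<Sum>i\<in>UNIV. \<alpha> i)"
      by (simp add: sum.distrib[symmetric])
    also have "\<dots> \<le> 2 * ?k + 1"
      using \<alpha> by (auto simp: reduced_exps_def)
    finally consider "(\<Sum>i\<in>UNIV. \<beta> i) \<le> ?k" | "(\<Sum>i\<in>UNIV. \<alpha> i - \<beta> i) \<le> ?k"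
      by linarith
    then show ?thesis
    proof cases
      case 1
      then have "\<beta> \<in> reduced_exps ?k" using le by (auto simp: reduced_exps_def intro: order_trans)
      from low_degree_split_left[OF this, of "\<lambda>t. c * mon (\<lambda>i. \<alpha> i - \<beta> i) t"] show ?thesis
        by (simp add: ac_simps)
    next
      case 2
      then have "(\<lambda>i. \<alpha> i - \<beta> i) \<in> reduced_exps ?k"
        using le by (auto simp: reduced_exps_def intro: order_trans[OF diff_le_self])
      from low_degree_split_right[OF this, of "\<lambda>a. c * mon \<beta> a"] show ?thesis
        by simp
    qed
  qed
  have "(\<lambda>(a, t). mon \<alpha> (a + t)) = (\<Sum>\<beta>\<in>(\<Pi>\<^sub>E i\<in>UNIV. {..\<alpha> i}).
      (\<lambda>(a, t). of_nat (\<Prod>i\<in>UNIV. \<alpha> i choose \<beta> i) * mon \<beta> a * mon (\<lambda>i. \<alpha> i - \<beta> i) t))"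
    by (simp add: fun_eq_iff sum_fun_apply mon_add)
  also have "\<dots> \<in> {g. low_degree_split ?k g}"
    by (intro fun_vs.subspace_sum[OF subspace_low_degree_split]) (use split_term in blast)
  finally show ?thesis by simp
qed

lemma low_degree_split_of_span:
  assumes "P \<in> fun_vs.span (mon ` reduced_exps d :: (('n::finite \<Rightarrow> 3) \<Rightarrow> gf3) set)"
  shows "low_degree_split (d div 2) (\<lambda>(a, t). P (a + t))"
proof -
  let ?S = "{g :: ('n \<Rightarrow> 3) \<times> ('n \<Rightarrow> 3) \<Rightarrow> gf3. low_degree_split (d div 2) g}"
  have S: "fun_vs.subspace ?S" by (rule subspace_low_degree_split)
  have translate_linear:
    "(\<lambda>(a, t). (0 :: ('n \<Rightarrow> 3) \<Rightarrow> gf3) (a + t)) = 0"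
    "(\<lambda>(a, t). (P + Q) (a + t)) = (\<lambda>(a, t). P (a + t)) + (\<lambda>(a, t). Q (a + t))"
    "(\<lambda>(a, t). fscale c P (a + t)) = fscale c (\<lambda>(a, t). P (a + t))"
    for P Q :: "('n \<Rightarrow> 3) \<Rightarrow> gf3" and c
    by (auto simp: fun_eq_iff fscale_def)
  have "fun_vs.subspace {P :: ('n \<Rightarrow> 3) \<Rightarrow> gf3. (\<lambda>(a, t). P (a + t)) \<in> ?S}"
    using S unfolding fun_vs.subspace_def by (simp only: translate_linear mem_Collect_eq) blast
  moreover have "(\<lambda>(a, t). m (a + t)) \<in> ?S" if "m \<in> mon ` reduced_exps d" for m
    using that low_degree_split_mon_add by auto
  ultimately show ?thesis
    using fun_vs.span_induct[OF assms, of "\<lambda>P. (\<lambda>(a, t). P (a + t)) \<in> ?S"] by simp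
qed

lemma card_support_le_of_low_degree_split:
  fixes A :: "('n::finite \<Rightarrow> 3) set" and P :: "('n \<Rightarrow> 3) \<Rightarrow> gf3"
  assumes cap: "\<forall>a\<in>A. \<forall>b\<in>A. \<forall>c\<in>A. b \<noteq> c \<longrightarrow> (\<lambda>i. a i + b i + c i) \<noteq> (\<lambda>i. 0)"
    and supp: "\<And>x. P x \<noteq> 0 \<Longrightarrow> x \<in> uminus ` A"
    and split: "low_degree_split k (\<lambda>(a, t). P (a + t))"
  shows "card {x. P x \<noteq> 0} \<le> 2 * card (reduced_exps k :: ('n \<Rightarrow> nat) set)"
proof -
  define T where "T = {a \<in> A. P (- a) \<noteq> 0}"
  have "{x. P x \<noteq> 0} = uminus ` T"
    using supp by (force simp: T_def)
  then have card_T: "card {x. P x \<noteq> 0} = card T"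
    by (simp add: card_image)
  obtain F G where FG: "\<And>a t. P (a + t)
      = (\<Sum>\<beta>\<in>reduced_exps k. mon \<beta> a * F \<beta> t) + (\<Sum>\<gamma>\<in>reduced_exps k. G \<gamma> a * mon \<gamma> t)"
    using split unfolding low_degree_split_def by auto
  let ?I = "reduced_exps k <+> reduced_exps k :: (('n \<Rightarrow> nat) + ('n \<Rightarrow> nat)) set"
  have "card T \<le> card ?I"
  proof (rule card_le_of_diagonal_decomposition[where f = "\<lambda>a t. P (a + t)"
        and u = "case_sum mon G" and v = "case_sum F mon"])
    show "P (a + t) = (\<Sum>i\<in>?I. case_sum mon G i a * case_sum F mon i t)" for a t
      by (simp add: FG sum.Plus finite_reduced_exps)
    show "P (t + t) \<noteq> 0" if "t \<in> T" for t
    proof -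
      have "t + t = - t" by (rule ext) (simp only: plus_fun_apply fun_Compl_def num3_add_self)
      moreover have "P (- t) \<noteq> 0" using that by (simp add: T_def)
      ultimately show ?thesis by metis
    qed
    show "P (a + t) = 0" if "a \<in> T" "t \<in> T" "a \<noteq> t" for a t
    proof (rule ccontr)
      assume "P (a + t) \<noteq> 0"
      then obtain c where "c \<in> A" "a + t = - c" using supp by blast
      then have "(\<lambda>i. c i + a i + t i) = (\<lambda>i. 0)"
        by (simp add: fun_eq_iff add.assoc)
      with cap \<open>c \<in> A\<close> that show False by (auto simp: T_def)
    qed
  qed (simp_all add: T_def finite_reduced_exps)
  then show ?thesis
    by (simp add: card_T card_Plus finite_reduced_exps)
qed

theorem mainTheorem5:
  fixes A :: "('n::finite \<Rightarrow> 3) set" and d :: nat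
  assumes "\<forall>a\<in>A. \<forall>b\<in>A. \<forall>c\<in>A. b \<noteq> c \<longrightarrow> (\<lambda>i. a i + b i + c i) \<noteq> (\<lambda>i. 0)"
  shows "int (card A) \<le> 2 * int (card (M CARD('n) (d div 2))) + 3 ^ CARD('n) - int (card (M CARD('n) d))"
proof -
  let ?n = "CARD('n)" and ?W = "fun_vs.span (mon ` reduced_exps d :: (('n \<Rightarrow> 3) \<Rightarrow> gf3) set)"
  obtain P where P: "P \<in> ?W" and vanish: "\<forall>x\<in>- uminus ` A. P x = 0"
    and dim: "fun_vs.dim ?W \<le> card {x. P x \<noteq> 0} + card (- uminus ` A)"
    using exists_vanishing_on_large_support[OF fun_vs.subspace_span] by blast
  have "card {x. P x \<noteq> 0} \<le> 2 * card (M ?n (d div 2))"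
    using card_support_le_of_low_degree_split[OF assms _ low_degree_split_of_span[OF P]] vanish
    by (auto simp: card_reduced_exps)
  moreover have "fun_vs.dim ?W = card (M ?n d)"
    by (simp add: dim_mon_reduced_exps card_reduced_exps)
  moreover have "card (- uminus ` A) = 3 ^ ?n - card A"
    by (simp add: Compl_eq_Diff_UNIV card_Diff_subset card_image card_fun)
  moreover have "card A \<le> 3 ^ ?n"
    using card_mono[of UNIV A] by (simp add: card_fun)
  ultimately have "card (M ?n d) + card A \<le> 2 * card (M ?n (d div 2)) + 3 ^ ?n"
    using dim by linarith
  then have "int (card (M ?n d) + card A) \<le> int (2 * card (M ?n (d div 2)) + 3 ^ ?n)"
    by (simp only: of_nat_le_iff)
  then show ?thesis by simp
qed

end
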